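(* Let $\sigma:\mathcal{A}^*\to\mathcal{B}^*$ be a return morphism for two distinct words $w,w'\in\mathcal{B}^+$ with $|w|\le|w'|$, and let $X$ be a shift space over $\mathcal{A}$. Then: (1) $w$ is a proper prefix of $w'$; (2) $\sigma$ is a return morphism for every prefix of $w'$ of length at least $|w|$; (3) $w$ is not right special in $\sigma\cdot X$; (4) if $w'$ has maximal length among the words for which $\sigma$ is a return morphism, then $w'$ is right special in $\sigma\cdot X$.
   Context: $\mathcal{A},\mathcal{B}$ are finite alphabets. A shift space over $\mathcal{A}$ is a nonempty closed shift-invariant $X\subseteq\mathcal{A}^{\mathbb{Z}}$ whose language contains every letter of $\mathcal{A}$. Morphisms are non-erasing monoid morphisms extended to $\mathcal{A}^{\mathbb{Z}}$ by concatenation, and $\sigma\cdot X=\{S^k\sigma(x): x\in X, 0\le k<|\sigma(x_0)|\}$ where $S$ is the shift. A return morphism for $w\in\mathcal{B}^+$ is an injective morphism $\sigma:\mathcal{A}^*\to\mathcal{B}^*$ such that for every $a\in\mathcal{A}$, $\sigma(a)w$ contains exactly two occurrences of $w$, one as a proper prefix and one as a proper suffix. A word $u$ is right special in a shift $Y$ if there are at least two letters $b$ with $ub$ in the language of $Y$. *)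

theory Defs
  imports Main "HOL-Library.Sublist"
begin

text \<open>Bi-infinite sequences over an alphabet 'a are functions int => 'a.
  The alphabets are the (finite) universes of the types 'a and 'b.\<close>

definition shift :: "(int \<Rightarrow> 'a) \<Rightarrow> (int \<Rightarrow> 'a)" where
  "shift x = (\<lambda>i. x (i + 1))"

definition factor_at :: "(int \<Rightarrow> 'a) \<Rightarrow> int \<Rightarrow> nat \<Rightarrow> 'a list" where
  "factor_at x i n = map (\<lambda>j. x (i + int j)) [0..<n]"

definition lang :: "(int \<Rightarrow> 'a) set \<Rightarrow> 'a list set" where
  "lang Y = {u. \<exists>y\<in>Y. \<exists>i. u = factor_at y i (length u)}"

text \<open>Closedness in the product topology of discrete spaces on 'a^Z:
  a point all of whose central blocks are approximated by points of X lies in X.\<close>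
definition shift_closed :: "(int \<Rightarrow> 'a) set \<Rightarrow> bool" where
  "shift_closed X \<longleftrightarrow>
     (\<forall>x. (\<forall>n::nat. \<exists>y\<in>X. \<forall>i. \<bar>i\<bar> \<le> int n \<longrightarrow> y i = x i) \<longrightarrow> x \<in> X)"

definition shift_space :: "(int \<Rightarrow> 'a::finite) set \<Rightarrow> bool" where
  "shift_space X \<longleftrightarrow> X \<noteq> {} \<and> shift_closed X \<and> shift ` X = X \<and>
     (\<forall>a::'a. [a] \<in> lang X)"

definition morph :: "('a \<Rightarrow> 'b list) \<Rightarrow> 'a list \<Rightarrow> 'b list" where
  "morph \<sigma> u = concat (map \<sigma> u)"

definition non_erasing :: "('a \<Rightarrow> 'b list) \<Rightarrow> bool" where
  "non_erasing \<sigma> \<longleftrightarrow> (\<forall>a. \<sigma> a \<noteq> [])"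

text \<open>Position in sigma(x) at which the image of x_n starts (sigma(x_0) starts at 0).\<close>
definition morph_offset :: "('a \<Rightarrow> 'b list) \<Rightarrow> (int \<Rightarrow> 'a) \<Rightarrow> int \<Rightarrow> int" where
  "morph_offset \<sigma> x n =
     (if 0 \<le> n then (\<Sum>i\<in>{0..<n}. int (length (\<sigma> (x i))))
      else - (\<Sum>i\<in>{n..<0}. int (length (\<sigma> (x i)))))"

text \<open>Extension of sigma to 'a^Z by concatenation:
  sigma(x) = ... sigma(x_{-1}) . sigma(x_0) sigma(x_1) ...\<close>
definition morph_seq :: "('a \<Rightarrow> 'b list) \<Rightarrow> (int \<Rightarrow> 'a) \<Rightarrow> (int \<Rightarrow> 'b)" where
  "morph_seq \<sigma> x j =
     (let n = (THE n. morph_offset \<sigma> x n \<le> j \<and> j < morph_offset \<sigma> x (n + 1))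
      in \<sigma> (x n) ! nat (j - morph_offset \<sigma> x n))"

definition morph_image :: "('a \<Rightarrow> 'b list) \<Rightarrow> (int \<Rightarrow> 'a) set \<Rightarrow> (int \<Rightarrow> 'b) set" where
  "morph_image \<sigma> X =
     {(shift ^^ k) (morph_seq \<sigma> x) | x k. x \<in> X \<and> k < length (\<sigma> (x 0))}"

definition occurrences :: "'b list \<Rightarrow> 'b list \<Rightarrow> nat set" where
  "occurrences w v = {i. i + length w \<le> length v \<and> take (length w) (drop i v) = w}"

definition return_morphism :: "('a \<Rightarrow> 'b list) \<Rightarrow> 'b list \<Rightarrow> bool" where
  "return_morphism \<sigma> w \<longleftrightarrow> w \<noteq> [] \<and> non_erasing \<sigma> \<and> inj (morph \<sigma>) \<and>
     (\<forall>a. card (occurrences w (\<sigma> a @ w)) = 2 \<and>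
          strict_prefix w (\<sigma> a @ w) \<and> strict_suffix w (\<sigma> a @ w))"

definition right_special :: "(int \<Rightarrow> 'b) set \<Rightarrow> 'b list \<Rightarrow> bool" where
  "right_special Y u \<longleftrightarrow> card {b. u @ [b] \<in> lang Y} \<ge> 2"

end

theory Submission
  imports Defs
begin

text \<open>Since \<open>w\<close> is a prefix of \<open>\<sigma>(a) w\<close> for every letter \<open>a\<close>, every \<open>\<sigma>\<close>-image of
  length at least \<open>|w|\<close> begins with \<open>w\<close>; two return words are thus prefixes of one long image.
  An occurrence of a prefix \<open>v\<close> of \<open>w'\<close> in \<open>\<sigma>(a) v\<close> contains an occurrence of \<open>w\<close> in
  \<open>\<sigma>(a) w\<close>, so it sits at \<open>0\<close> or at \<open>|\<sigma>(a)|\<close>.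
  By the same argument an occurrence of \<open>w\<close> in \<open>\<sigma>\<cdot>X\<close> starts at a cut point between the
  images of two consecutive letters; the long image following it begins with \<open>w'\<close>, so \<open>w\<close> has
  the single right extension by the letter of \<open>w'\<close> at position \<open>|w|\<close>.
  If \<open>w'\<close> had a single right extension \<open>w'c\<close>, every long image would begin with \<open>w'c\<close>;
  reading \<open>\<sigma>(a)\<close> followed by a long image shows that \<open>w'c\<close> is a prefix of \<open>\<sigma>(a) w'c\<close>,
  so \<open>\<sigma>\<close> would be a return morphism for the longer word \<open>w'c\<close>.\<close>

lemma occurrences_iff_prefix_drop:
  "i \<in> occurrences w v \<longleftrightarrow> i \<le> length v \<and> prefix w (drop i v)"
proof -
  have "take (length w) (drop i v) = w \<and> i + length w \<le> length v
      \<longleftrightarrow> i \<le> length v \<and> prefix w (drop i v)"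
    by (metis prefix_def le_add1 length_drop order_trans prefix_length_le take_is_prefix
        le_diff_conv2 add.commute append_eq_conv_conj)
  then show ?thesis unfolding occurrences_def by auto
qed

lemma return_morphism_non_erasing: "return_morphism \<sigma> w \<Longrightarrow> \<sigma> a \<noteq> []"
  by (simp add: return_morphism_def non_erasing_def)

lemma return_morphism_prefix_image: "return_morphism \<sigma> w \<Longrightarrow> prefix w (\<sigma> a @ w)"
  by (simp add: return_morphism_def strict_prefix_def)

lemma return_morphism_occurrences:
  assumes "return_morphism \<sigma> w"
  shows "occurrences w (\<sigma> a @ w) = {0, length (\<sigma> a)}"
proof -
  have card: "card (occurrences w (\<sigma> a @ w)) = 2"
    using assms by (simp add: return_morphism_def)
  have "{0, length (\<sigma> a)} \<subseteq> occurrences w (\<sigma> a @ w)"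
    using return_morphism_prefix_image[OF assms] by (simp add: occurrences_iff_prefix_drop)
  moreover have "card {0, length (\<sigma> a)} = 2"
    using return_morphism_non_erasing[OF assms] by simp
  ultimately show ?thesis
    using card by (metis card_subset_eq card.infinite zero_neq_numeral)
qed

lemma return_morphism_occurrence_cases:
  assumes "return_morphism \<sigma> w" and "i \<le> length (\<sigma> a)"
    and "prefix w (drop i (\<sigma> a) @ w @ t)"
  shows "i = 0 \<or> i = length (\<sigma> a)"
proof -
  have "prefix w (drop i (\<sigma> a) @ w)"
    using assms(3) by (rule prefix_length_prefix) auto
  then have "i \<in> occurrences w (\<sigma> a @ w)"
    using assms(2) by (simp add: occurrences_iff_prefix_drop)
  then show ?thesis
    using return_morphism_occurrences[OF assms(1)] by blast
qed

lemma return_morphism_extend: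
  assumes ret: "return_morphism \<sigma> w" and "prefix w v" and v: "\<And>a. prefix v (\<sigma> a @ v)"
  shows "return_morphism \<sigma> v"
proof -
  obtain t where t: "v = w @ t" using \<open>prefix w v\<close> by (auto simp: prefix_def)
  have occ: "occurrences v (\<sigma> a @ v) = {0, length (\<sigma> a)}" for a
  proof
    show "{0, length (\<sigma> a)} \<subseteq> occurrences v (\<sigma> a @ v)"
      using v[of a] by (simp add: occurrences_iff_prefix_drop)
  next
    show "occurrences v (\<sigma> a @ v) \<subseteq> {0, length (\<sigma> a)}"
    proof
      fix i assume i_occ: "i \<in> occurrences v (\<sigma> a @ v)"
      then have i: "i \<le> length (\<sigma> a)"
        by (simp add: occurrences_def)
      from i_occ have "prefix v (drop i (\<sigma> a @ v))"
        by (simp add: occurrences_iff_prefix_drop)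
      with i have "prefix w (drop i (\<sigma> a) @ w @ t)"
        unfolding t using append_prefixD by auto
      then show "i \<in> {0, length (\<sigma> a)}"
        using return_morphism_occurrence_cases[OF ret i] by blast
    qed
  qed
  have "\<sigma> a \<noteq> []" for a
    using return_morphism_non_erasing[OF ret] .
  then show ?thesis
    using ret v occ \<open>prefix w v\<close>
    by (auto simp: return_morphism_def strict_prefix_def strict_suffix_def suffix_def)
qed

lemma length_morph_ge: "non_erasing \<sigma> \<Longrightarrow> length xs \<le> length (morph \<sigma> xs)"
proof (induction xs)
  case (Cons a xs)
  then have "\<sigma> a \<noteq> []" by (simp add: non_erasing_def)
  with Cons show ?case by (cases "\<sigma> a") (simp_all add: morph_def)
qed (simp add: morph_def)

lemma return_morphism_prefix_morph: "return_morphism \<sigma> w \<Longrightarrow> prefix w (morph \<sigma> xs @ w)"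
proof (induction xs)
  case (Cons a xs)
  then have "prefix (\<sigma> a @ w) (morph \<sigma> (a # xs) @ w)" by (simp add: morph_def)
  with return_morphism_prefix_image[OF Cons.prems] show ?case
    by (rule prefix_order.trans)
qed (simp add: morph_def)

lemma return_morphism_prefix_long_morph:
  assumes "return_morphism \<sigma> w" and "length w \<le> length (morph \<sigma> xs)"
  shows "prefix w (morph \<sigma> xs)"
  using return_morphism_prefix_morph[OF assms(1), of xs] _ assms(2)
  by (rule prefix_length_prefix) simp

lemma return_morphism_prefix_of_longer:
  assumes "return_morphism \<sigma> w" and "return_morphism \<sigma> w'" and "length w \<le> length w'"
  shows "prefix w w'"
proof -
  let ?u = "morph \<sigma> (replicate (length w') a)"
  have "length w' \<le> length ?u"
    using length_morph_ge[of \<sigma> "replicate (length w') a"] assms(2)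
    by (simp add: return_morphism_def)
  then have "prefix w ?u" and "prefix w' ?u"
    using assms return_morphism_prefix_long_morph by (auto intro: le_trans)
  then show ?thesis
    using assms(3) by (rule prefix_length_prefix)
qed

lemma return_morphism_prefix_between:
  assumes "return_morphism \<sigma> w" and "return_morphism \<sigma> w'"
    and "prefix w v" and "prefix v w'"
  shows "return_morphism \<sigma> v"
proof (rule return_morphism_extend[OF assms(1,3)])
  fix a
  have "prefix v (\<sigma> a @ w')"
    using assms(4) return_morphism_prefix_image[OF assms(2)] prefix_order.trans by blast
  moreover have "prefix (\<sigma> a @ v) (\<sigma> a @ w')"
    using assms(4) by simp
  ultimately show "prefix v (\<sigma> a @ v)"
    by (rule prefix_length_prefix) simp
qed

definition morph_block :: "('a \<Rightarrow> 'b list) \<Rightarrow> (int \<Rightarrow> 'a) \<Rightarrow> int \<Rightarrow> nat \<Rightarrow> 'b list" where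
  "morph_block \<sigma> x n k = morph \<sigma> (map (\<lambda>i. x (n + int i)) [0..<k])"

lemma morph_block_0 [simp]: "morph_block \<sigma> x n 0 = []"
  by (simp add: morph_block_def morph_def)

lemma morph_block_Suc: "morph_block \<sigma> x n (Suc k) = morph_block \<sigma> x n k @ \<sigma> (x (n + int k))"
  by (simp add: morph_block_def morph_def)

lemma morph_block_Suc': "morph_block \<sigma> x n (Suc k) = \<sigma> (x n) @ morph_block \<sigma> x (n + 1) k"
proof -
  have "[0..<Suc k] = 0 # map Suc [0..<k]"
    by (simp add: upt_conv_Cons map_Suc_upt)
  then show ?thesis
    by (simp add: morph_block_def morph_def comp_def algebra_simps)
qed

lemma length_morph_block_ge: "non_erasing \<sigma> \<Longrightarrow> k \<le> length (morph_block \<sigma> x n k)"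
  using length_morph_ge[of \<sigma> "map (\<lambda>i. x (n + int i)) [0..<k]"] by (simp add: morph_block_def)

lemma return_morphism_prefix_morph_block:
  assumes "return_morphism \<sigma> w" and "length w \<le> k"
  shows "prefix w (morph_block \<sigma> x n k)"
proof -
  have "non_erasing \<sigma>"
    using assms(1) by (simp add: return_morphism_def)
  then have "length w \<le> length (morph_block \<sigma> x n k)"
    using assms(2) length_morph_block_ge[of \<sigma> k x n] by linarith
  then show ?thesis
    unfolding morph_block_def by (rule return_morphism_prefix_long_morph[OF assms(1)])
qed

lemma morph_offset_0 [simp]: "morph_offset \<sigma> x 0 = 0"
  by (simp add: morph_offset_def)

lemma morph_offset_Suc:
  "morph_offset \<sigma> x (n + 1) = morph_offset \<sigma> x n + int (length (\<sigma> (x n)))"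
proof (cases "n \<ge> 0")
  case True
  then have "{0..<n + 1} = insert n {0..<n}" by auto
  with True show ?thesis by (simp add: morph_offset_def)
next
  case False
  then have "{n..<0} = insert n {n + 1..<0}" by auto
  with False show ?thesis by (simp add: morph_offset_def)
qed

lemma morph_offset_add:
  "morph_offset \<sigma> x (n + int k) = morph_offset \<sigma> x n + int (length (morph_block \<sigma> x n k))"
proof (induction k)
  case (Suc k)
  have "morph_offset \<sigma> x (n + int (Suc k)) = morph_offset \<sigma> x (n + int k + 1)"
    by (simp add: algebra_simps)
  with Suc show ?case
    by (simp add: morph_offset_Suc morph_block_Suc)
qed simp

lemma morph_offset_mono: "n \<le> m \<Longrightarrow> morph_offset \<sigma> x n \<le> morph_offset \<sigma> x m"
  by (auto simp: zle_iff_zadd morph_offset_add)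

lemma int_fun_step_between:
  fixes f :: "int \<Rightarrow> int"
  assumes "a \<le> b" and "f a \<le> j" and "j < f b"
  shows "\<exists>n. f n \<le> j \<and> j < f (n + 1)"
  using assms(1,3)
proof (induction b rule: int_ge_induct)
  case (step b)
  show ?case
  proof (cases "j < f b")
    case False
    with step.prems show ?thesis by (metis not_less)
  qed (use step.IH in blast)
qed (use assms(2) in simp)

lemma morph_offset_cover:
  assumes "non_erasing \<sigma>"
  shows "\<exists>n. morph_offset \<sigma> x n \<le> j \<and> j < morph_offset \<sigma> x (n + 1)"
proof -
  let ?m = "nat \<bar>j\<bar>"
  have "morph_offset \<sigma> x (- int ?m + int ?m)
      = morph_offset \<sigma> x (- int ?m) + int (length (morph_block \<sigma> x (- int ?m) ?m))"
    by (rule morph_offset_add)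
  moreover have "int ?m \<le> int (length (morph_block \<sigma> x (- int ?m) ?m))"
    using length_morph_block_ge[OF assms] by (simp only: of_nat_le_iff)
  ultimately have lo: "morph_offset \<sigma> x (- int ?m) \<le> j"
    by simp
  have "morph_offset \<sigma> x (0 + int (Suc ?m)) = int (length (morph_block \<sigma> x 0 (Suc ?m)))"
    by (simp only: morph_offset_add morph_offset_0)
  then have hi: "j < morph_offset \<sigma> x (int (Suc ?m))"
    using length_morph_block_ge[OF assms, of "Suc ?m" x 0] by simp
  show ?thesis
    using int_fun_step_between[of _ _ "morph_offset \<sigma> x", OF _ lo hi] by simp
qed

lemma morph_offset_cover_unique:
  assumes "morph_offset \<sigma> x n \<le> j" "j < morph_offset \<sigma> x (n + 1)"
    and "morph_offset \<sigma> x m \<le> j" "j < morph_offset \<sigma> x (m + 1)"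
  shows "n = m"
  using morph_offset_mono[of "n + 1" m \<sigma> x] morph_offset_mono[of "m + 1" n \<sigma> x] assms
  by linarith

lemma morph_seq_eq_nth:
  assumes "morph_offset \<sigma> x n \<le> j" "j < morph_offset \<sigma> x (n + 1)"
  shows "morph_seq \<sigma> x j = \<sigma> (x n) ! nat (j - morph_offset \<sigma> x n)"
proof -
  have "(THE n. morph_offset \<sigma> x n \<le> j \<and> j < morph_offset \<sigma> x (n + 1)) = n"
    using assms morph_offset_cover_unique by blast
  then show ?thesis unfolding morph_seq_def Let_def by simp
qed

lemma morph_seq_morph_block:
  "j < length (morph_block \<sigma> x n k) \<Longrightarrow>
    morph_seq \<sigma> x (morph_offset \<sigma> x n + int j) = morph_block \<sigma> x n k ! j"
proof (induction k)
  case (Suc k)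
  let ?L = "length (morph_block \<sigma> x n k)"
  show ?case
  proof (cases "j < ?L")
    case False
    have "morph_seq \<sigma> x (morph_offset \<sigma> x n + int j)
        = \<sigma> (x (n + int k)) ! nat (morph_offset \<sigma> x n + int j - morph_offset \<sigma> x (n + int k))"
      using False Suc.prems
      by (intro morph_seq_eq_nth) (auto simp: morph_offset_add morph_offset_Suc morph_block_Suc)
    also have "\<dots> = \<sigma> (x (n + int k)) ! (j - ?L)"
      using False by (simp add: morph_offset_add nat_diff_distrib)
    finally show ?thesis
      using False by (simp add: morph_block_Suc nth_append)
  qed (use Suc in \<open>simp add: morph_block_Suc nth_append\<close>)
qed simp

lemma length_factor_at [simp]: "length (factor_at y i n) = n"
  by (simp add: factor_at_def)

lemma factor_at_morph_seq:
  assumes "r + m \<le> length (morph_block \<sigma> x n k)"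
  shows "factor_at (morph_seq \<sigma> x) (morph_offset \<sigma> x n + int r) m
    = take m (drop r (morph_block \<sigma> x n k))"
proof (rule nth_equalityI)
  fix i assume "i < length (factor_at (morph_seq \<sigma> x) (morph_offset \<sigma> x n + int r) m)"
  then have "i < m" by simp
  with assms have "r + i < length (morph_block \<sigma> x n k)" by simp
  from morph_seq_morph_block[OF this] assms \<open>i < m\<close>
  show "factor_at (morph_seq \<sigma> x) (morph_offset \<sigma> x n + int r) m ! i
      = take m (drop r (morph_block \<sigma> x n k)) ! i"
    by (simp add: factor_at_def algebra_simps)
qed (use assms in simp)

lemma shift_power: "(shift ^^ k) y = (\<lambda>i. y (i + int k))"
  by (induction k) (auto simp: shift_def algebra_simps)

lemma lang_morph_image:
  assumes "non_erasing \<sigma>"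
  shows "lang (morph_image \<sigma> X)
    = {u. \<exists>x\<in>X. \<exists>p. u = factor_at (morph_seq \<sigma> x) p (length u)}"
proof (intro equalityI subsetI CollectI)
  fix u assume "u \<in> lang (morph_image \<sigma> X)"
  then obtain x k i where "x \<in> X"
    and "u = factor_at ((shift ^^ k) (morph_seq \<sigma> x)) i (length u)"
    unfolding lang_def morph_image_def by blast
  then have "u = factor_at (morph_seq \<sigma> x) (i + int k) (length u)"
    by (simp add: shift_power factor_at_def algebra_simps)
  with \<open>x \<in> X\<close> show "\<exists>x\<in>X. \<exists>p. u = factor_at (morph_seq \<sigma> x) p (length u)"
    by blast
next
  fix u assume "u \<in> {u. \<exists>x\<in>X. \<exists>p. u = factor_at (morph_seq \<sigma> x) p (length u)}"
  then obtain x p where "x \<in> X" and u: "u = factor_at (morph_seq \<sigma> x) p (length u)"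
    by blast
  moreover have "\<sigma> (x 0) \<noteq> []"
    using assms by (simp add: non_erasing_def)
  ultimately have "morph_seq \<sigma> x \<in> morph_image \<sigma> X"
    unfolding morph_image_def by (auto intro!: exI[of _ x] exI[of _ 0])
  with u show "u \<in> lang (morph_image \<sigma> X)"
    unfolding lang_def by blast
qed

lemma take_morph_block_in_lang:
  assumes "non_erasing \<sigma>" and "x \<in> X"
  shows "take m (morph_block \<sigma> x n k) \<in> lang (morph_image \<sigma> X)"
proof -
  let ?l = "min m (length (morph_block \<sigma> x n k))"
  have "take m (morph_block \<sigma> x n k) = factor_at (morph_seq \<sigma> x) (morph_offset \<sigma> x n + int 0) ?l"
    by (subst factor_at_morph_seq) (auto simp: min_def)
  with assms(2) show ?thesis
    unfolding lang_morph_image[OF assms(1)] by auto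
qed

lemma lang_morph_image_in_block:
  assumes "non_erasing \<sigma>" and "u \<in> lang (morph_image \<sigma> X)" and "length u \<le> K"
  obtains x n r where "x \<in> X" and "r < length (\<sigma> (x n))"
    and "u = take (length u) (drop r (morph_block \<sigma> x n (Suc K)))"
proof -
  obtain x p where x: "x \<in> X" and u: "u = factor_at (morph_seq \<sigma> x) p (length u)"
    using assms(2) unfolding lang_morph_image[OF assms(1)] by blast
  obtain n where n: "morph_offset \<sigma> x n \<le> p" "p < morph_offset \<sigma> x (n + 1)"
    using morph_offset_cover[OF assms(1)] by blast
  define r where "r = nat (p - morph_offset \<sigma> x n)"
  have p: "p = morph_offset \<sigma> x n + int r"
    using n r_def by simp
  have r: "r < length (\<sigma> (x n))"
    using n(2) p by (simp add: morph_offset_Suc)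
  have "r + length u \<le> length (morph_block \<sigma> x n (Suc K))"
    using r assms(3) length_morph_block_ge[OF assms(1), of K x "n + 1"]
    by (simp add: morph_block_Suc')
  then have "u = take (length u) (drop r (morph_block \<sigma> x n (Suc K)))"
    using u p factor_at_morph_seq by metis
  with x r show ?thesis by (rule that)
qed

lemma return_morphism_not_right_special:
  assumes ret: "return_morphism \<sigma> w" and ret': "return_morphism \<sigma> w'"
    and "strict_prefix w w'"
  shows "\<not> right_special (morph_image \<sigma> X) w"
proof -
  have ne: "non_erasing \<sigma>"
    using ret by (simp add: return_morphism_def)
  have lw: "length w < length w'"
    using \<open>strict_prefix w w'\<close> by (rule prefix_length_less)
  have "{b. w @ [b] \<in> lang (morph_image \<sigma> X)} \<subseteq> {w' ! length w}"
  proof (intro subsetI, elim CollectE)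
    fix b assume b: "w @ [b] \<in> lang (morph_image \<sigma> X)"
    have "length (w @ [b]) \<le> length w'"
      using lw by simp
    then obtain x n r where r: "r < length (\<sigma> (x n))"
      and u: "w @ [b] = take (length (w @ [b])) (drop r (morph_block \<sigma> x n (Suc (length w'))))"
      using lang_morph_image_in_block[OF ne b] by blast
    let ?B = "morph_block \<sigma> x n (Suc (length w'))"
    have "prefix w' (morph_block \<sigma> x (n + 1) (length w'))"
      using ret' by (rule return_morphism_prefix_morph_block) simp
    then have "prefix w (morph_block \<sigma> x (n + 1) (length w'))"
      using \<open>strict_prefix w w'\<close> by (meson prefix_order.less_imp_le prefix_order.trans)
    then obtain t where t: "morph_block \<sigma> x (n + 1) (length w') = w @ t"
      by (auto simp: prefix_def)
    have pre: "prefix (w @ [b]) (drop r ?B)"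
      by (subst u) (rule take_is_prefix)
    then have "prefix w (drop r ?B)"
      by (rule append_prefixD)
    then have "prefix w (drop r (\<sigma> (x n)) @ w @ t)"
      using r by (simp add: morph_block_Suc' t)
    then have "r = 0"
      using return_morphism_occurrence_cases[OF ret less_imp_le[OF r]] r by simp
    with pre have "prefix (w @ [b]) ?B"
      by simp
    moreover have "prefix w' ?B"
      using ret' by (rule return_morphism_prefix_morph_block) simp
    ultimately have "prefix (w @ [b]) w'"
      by (rule prefix_length_prefix) (use lw in simp)
    then show "b \<in> {w' ! length w}"
      by (auto simp: prefix_def nth_append)
  qed
  then have "card {b. w @ [b] \<in> lang (morph_image \<sigma> X)} \<le> card {w' ! length w}"
    by (rule card_mono[rotated]) simp
  then show ?thesis
    by (simp add: right_special_def)
qed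

lemma return_morphism_maximal_right_special:
  fixes \<sigma> :: "'a::finite \<Rightarrow> 'b::finite list"
  assumes ret: "return_morphism \<sigma> w"
    and maximal: "\<And>v. return_morphism \<sigma> v \<Longrightarrow> length v \<le> length w"
    and "shift_space X"
  shows "right_special (morph_image \<sigma> X) w"
proof (rule ccontr)
  have ne: "non_erasing \<sigma>"
    using ret by (simp add: return_morphism_def)
  assume "\<not> right_special (morph_image \<sigma> X) w"
  then have "card {c. w @ [c] \<in> lang (morph_image \<sigma> X)} \<le> Suc 0"
    by (simp add: right_special_def)
  then obtain c where c: "\<And>d. w @ [d] \<in> lang (morph_image \<sigma> X) \<Longrightarrow> d = c"
    by (metis (mono_tags) card_le_Suc0_iff_eq finite mem_Collect_eq)
  have follow: "prefix (w @ [c]) (morph_block \<sigma> y n k)" if "y \<in> X" and "length w < k" for y n k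
  proof -
    obtain zs where zs: "morph_block \<sigma> y n k = w @ zs"
      using return_morphism_prefix_morph_block[OF ret, of k y n] \<open>length w < k\<close>
      by (auto simp: prefix_def)
    moreover have "zs \<noteq> []"
      using length_morph_block_ge[OF ne, of k y n] \<open>length w < k\<close> zs by auto
    ultimately have "take (Suc (length w)) (morph_block \<sigma> y n k) = w @ [hd zs]"
      by (cases zs) auto
    then have "hd zs = c"
      using c take_morph_block_in_lang[OF ne \<open>y \<in> X\<close>] by metis
    with zs \<open>zs \<noteq> []\<close> show ?thesis
      by (cases zs) auto
  qed
  have "prefix (w @ [c]) (\<sigma> a @ w @ [c])" for a
  proof -
    have "[a] \<in> lang X"
      using \<open>shift_space X\<close> by (simp add: shift_space_def)
    then obtain y i where y: "y \<in> X" and "y i = a"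
      by (auto simp: lang_def factor_at_def)
    let ?K = "Suc (length w)"
    have B: "morph_block \<sigma> y i (Suc ?K) = \<sigma> a @ morph_block \<sigma> y (i + 1) ?K"
      using \<open>y i = a\<close> by (simp only: morph_block_Suc')
    have "prefix (w @ [c]) (morph_block \<sigma> y i (Suc ?K))"
      using follow[OF y] by simp
    moreover have "prefix (\<sigma> a @ w @ [c]) (morph_block \<sigma> y i (Suc ?K))"
      unfolding B using follow[OF y] by simp
    ultimately show ?thesis
      by (rule prefix_length_prefix) simp
  qed
  then have "return_morphism \<sigma> (w @ [c])"
    by (intro return_morphism_extend[OF ret]) simp_all
  then show False
    using maximal by fastforce
qed

theorem mainTheorem3:
  fixes \<sigma> :: "'a::finite \<Rightarrow> 'b::finite list"
    and w w' :: "'b list"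
    and X :: "(int \<Rightarrow> 'a) set"
  assumes "return_morphism \<sigma> w" and "return_morphism \<sigma> w'"
    and "w \<noteq> w'" and "length w \<le> length w'"
    and "shift_space X"
  shows "strict_prefix w w'
    \<and> (\<forall>v. prefix v w' \<and> length w \<le> length v \<longrightarrow> return_morphism \<sigma> v)
    \<and> \<not> right_special (morph_image \<sigma> X) w
    \<and> ((\<forall>v. return_morphism \<sigma> v \<longrightarrow> length v \<le> length w')
         \<longrightarrow> right_special (morph_image \<sigma> X) w')"
proof (intro conjI allI impI)
  have "prefix w w'"
    using assms(1,2,4) by (rule return_morphism_prefix_of_longer)
  then show "strict_prefix w w'"
    using \<open>w \<noteq> w'\<close> by (simp add: strict_prefix_def)
  then show "\<not> right_special (morph_image \<sigma> X) w"
    using assms(1,2) return_morphism_not_right_special by blast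
  fix v assume "prefix v w' \<and> length w \<le> length v"
  then show "return_morphism \<sigma> v"
    using assms(1,2) \<open>prefix w w'\<close> return_morphism_prefix_between prefix_length_prefix by blast
next
  assume "\<forall>v. return_morphism \<sigma> v \<longrightarrow> length v \<le> length w'"
  then show "right_special (morph_image \<sigma> X) w'"
    using return_morphism_maximal_right_special[OF assms(2) _ assms(5)] by blast
qed

end
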